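(* Let $\vec a\in\mathbb R^4\setminus\{0\}$, let $V\in\mathfrak X(\mathbb S^3)$ be the proper conformal vector field $V(p)=\vec a-\langle\vec a,p\rangle p$, let $q\neq0$, and let $\gamma\colon I\to\mathbb S^3$ be a curve parametrized by arc-length which is a conformal trajectory of $V$. Then there exist $a_1,a_2\in\mathbb R$ such that $$\langle\gamma(s),\vec a\rangle=a_1\cos s+a_2\sin s\quad\text{for all }s\in I.$$ If $\gamma$ is a geodesic, then $\gamma(s)=\cos(s)\,\vec v+\sin(s)\,\vec w$ for orthonormal vectors $\vec v,\vec w\in\mathbb R^4$ with $\vec a\in\operatorname{span}\{\vec v,\vec w\}$; that is, $\gamma$ is (an arc of) the great circle obtained by intersecting $\mathbb S^3$ with a $2$-plane through the origin containing $\vec a$. If $\gamma$ is not a geodesic, then its curvature is constant, $\kappa=|q|\sqrt{|\vec a|^2-(a_1^2+a_2^2)}$, and its torsion is $\tau(s)=-q\,(a_1\sin s-a_2\cos s)$.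
   Context: $\mathbb S^3=\{p\in\mathbb R^4:|p|=1\}$ with the metric induced by the Euclidean inner product $\langle\cdot,\cdot\rangle$ of $\mathbb R^4$; its Levi-Civita connection is $\nabla$, so for a unit-speed curve $\nabla_{\gamma'}\gamma'=\gamma''+\gamma$. The cross product of $u,v\in T_p\mathbb S^3$ is the unique $u\times v\in T_p\mathbb S^3$ with $\langle u\times v,w\rangle=\det(u,v,w,p)$ for all $w\in T_p\mathbb S^3$. For a fixed real $q\neq0$, a conformal trajectory of $V$ is a regular curve with $\nabla_{\gamma'}\gamma'=q\,V\times\gamma'$. Frenet frame of a non-geodesic unit-speed curve: $T=\gamma'$, $\nabla_TT=\kappa N$ with $\kappa>0$, $B=T\times N$, $\nabla_TN=-\kappa T+\tau B$, $\nabla_TB=-\tau N$; $\kappa$ is the curvature, $\tau$ the torsion. *)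

theory Defs
  imports "HOL-Analysis.Analysis"
begin

text \<open>Cross product in T_p S^3: the vector whose i-th component is det(u,v,e_i,p).
  Hence its inner product with w equals det(u,v,w,p) for every w in R^4, and it is
  orthogonal to p, so it is the unique tangent vector with that property.\<close>
definition sphere_cross :: "real^4 \<Rightarrow> real^4 \<Rightarrow> real^4 \<Rightarrow> real^4" where
  "sphere_cross p u v =
     (\<chi> i. det ((\<chi> j. if j = 1 then u else if j = 2 then v
                      else if j = 3 then axis i 1 else p) :: real^4^4))"

definition confV :: "real^4 \<Rightarrow> real^4 \<Rightarrow> real^4" where
  "confV a p = a - (a \<bullet> p) *\<^sub>R p"

definition vel :: "(real \<Rightarrow> real^4) \<Rightarrow> real \<Rightarrow> real^4" where
  "vel g s = vector_derivative g (at s)"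

definition cov_deriv :: "(real \<Rightarrow> real^4) \<Rightarrow> (real \<Rightarrow> real^4) \<Rightarrow> real \<Rightarrow> real^4" where
  "cov_deriv g X s =
     vector_derivative X (at s) - (vector_derivative X (at s) \<bullet> g s) *\<^sub>R g s"

definition curv :: "(real \<Rightarrow> real^4) \<Rightarrow> real \<Rightarrow> real" where
  "curv g s = norm (cov_deriv g (vel g) s)"

definition frenetN :: "(real \<Rightarrow> real^4) \<Rightarrow> real \<Rightarrow> real^4" where
  "frenetN g s = (1 / curv g s) *\<^sub>R cov_deriv g (vel g) s"

definition frenetB :: "(real \<Rightarrow> real^4) \<Rightarrow> real \<Rightarrow> real^4" where
  "frenetB g s = sphere_cross (g s) (vel g s) (frenetN g s)"

text \<open>Torsion: the B-component of nabla_T N (Frenet equation nabla_T N = -kappa T + tau B).\<close>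
definition tors :: "(real \<Rightarrow> real^4) \<Rightarrow> real \<Rightarrow> real" where
  "tors g s = cov_deriv g (frenetN g) s \<bullet> frenetB g s"

end

theory Submission imports Defs begin

text \<open>Along a unit-speed curve on \<open>S\<^sup>3\<close> the acceleration is \<open>\<gamma>'' = \<nabla>\<^sub>T T - \<gamma>\<close>, and for a conformal
  trajectory \<open>\<nabla>\<^sub>T T = q V \<times> T = q a \<times> T\<close> (the \<open>\<gamma>\<close>-component of \<open>V\<close> drops out) is orthogonal
  to \<open>a\<close>. Hence \<open>f = \<langle>\<gamma>, a\<rangle>\<close> satisfies \<open>f'' = -f\<close>, which gives the cosine-sine form. The Gram identity for the cross product yields
  \<open>|a \<times> T|\<^sup>2 = |a|\<^sup>2 - f\<^sup>2 - f'\<^sup>2 = |a|\<^sup>2 - (a\<^sub>1\<^sup>2 + a\<^sub>2\<^sup>2)\<close>, so the curvature \<open>|q| |a \<times> T|\<close> is constant.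
  Differentiating \<open>a \<times> T\<close> gives \<open>q a \<times> (a \<times> T)\<close>, and the Gram identity again reduces the torsion to
  \<open>q \<langle>a, T\<rangle> = q f'\<close>. If \<open>\<gamma>\<close> is a geodesic, then \<open>\<gamma>'' = -\<gamma>\<close> makes \<open>\<gamma>\<close> a great circle, and
  \<open>a \<times> T = 0\<close> puts \<open>a\<close> into the plane spanned by \<open>\<gamma>\<close> and \<open>T\<close>.\<close>

lemma det_4:
  "det (A::'a::comm_ring_1^4^4) =
      A$1$1 * A$2$2 * A$3$3 * A$4$4 - A$1$1 * A$2$2 * A$3$4 * A$4$3
    - A$1$1 * A$2$3 * A$3$2 * A$4$4 + A$1$1 * A$2$3 * A$3$4 * A$4$2
    + A$1$1 * A$2$4 * A$3$2 * A$4$3 - A$1$1 * A$2$4 * A$3$3 * A$4$2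
    - A$1$2 * A$2$1 * A$3$3 * A$4$4 + A$1$2 * A$2$1 * A$3$4 * A$4$3
    + A$1$2 * A$2$3 * A$3$1 * A$4$4 - A$1$2 * A$2$3 * A$3$4 * A$4$1
    - A$1$2 * A$2$4 * A$3$1 * A$4$3 + A$1$2 * A$2$4 * A$3$3 * A$4$1
    + A$1$3 * A$2$1 * A$3$2 * A$4$4 - A$1$3 * A$2$1 * A$3$4 * A$4$2
    - A$1$3 * A$2$2 * A$3$1 * A$4$4 + A$1$3 * A$2$2 * A$3$4 * A$4$1
    + A$1$3 * A$2$4 * A$3$1 * A$4$2 - A$1$3 * A$2$4 * A$3$2 * A$4$1
    - A$1$4 * A$2$1 * A$3$2 * A$4$3 + A$1$4 * A$2$1 * A$3$3 * A$4$2
    + A$1$4 * A$2$2 * A$3$1 * A$4$3 - A$1$4 * A$2$2 * A$3$3 * A$4$1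
    - A$1$4 * A$2$3 * A$3$1 * A$4$2 + A$1$4 * A$2$3 * A$3$2 * A$4$1"
proof -
  have f1: "finite {2::4, 3, 4}" "1 \<notin> {2::4, 3, 4}" by auto
  have f2: "finite {3::4, 4}" "2 \<notin> {3::4, 4}" by auto
  have f3: "finite {4::4}" "3 \<notin> {4::4}" by auto
  show ?thesis
    unfolding det_def UNIV_4
    unfolding sum_over_permutations_insert[OF f1] sum_over_permutations_insert[OF f2]
      sum_over_permutations_insert[OF f3] permutes_sing
    by (simp add: sign_swap_id permutation_swap_id sign_compose permutation_compose
        swap_id_eq algebra_simps)
qed

lemma sphere_cross_nth:
  "sphere_cross p u v $ 1 = u$2 * v$3 * p$4 + u$3 * v$4 * p$2 + u$4 * v$2 * p$3
                          - u$2 * v$4 * p$3 - u$3 * v$2 * p$4 - u$4 * v$3 * p$2"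
  "sphere_cross p u v $ 2 = - (u$1 * v$3 * p$4 + u$3 * v$4 * p$1 + u$4 * v$1 * p$3
                          - u$1 * v$4 * p$3 - u$3 * v$1 * p$4 - u$4 * v$3 * p$1)"
  "sphere_cross p u v $ 3 = u$1 * v$2 * p$4 + u$2 * v$4 * p$1 + u$4 * v$1 * p$2
                          - u$1 * v$4 * p$2 - u$2 * v$1 * p$4 - u$4 * v$2 * p$1"
  "sphere_cross p u v $ 4 = - (u$1 * v$2 * p$3 + u$2 * v$3 * p$1 + u$3 * v$1 * p$2
                          - u$1 * v$3 * p$2 - u$2 * v$1 * p$3 - u$3 * v$2 * p$1)"
  unfolding sphere_cross_def det_4 by (simp_all add: axis_def algebra_simps)

lemma inner_vec_4: "(x::real^4) \<bullet> y = x$1*y$1 + x$2*y$2 + x$3*y$3 + x$4*y$4"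
  by (simp add: inner_vec_def sum_4)

lemma inner_sphere_cross_sphere_cross:
  "sphere_cross p x y \<bullet> sphere_cross p' x' y' =
      (x\<bullet>x')*(y\<bullet>y')*(p\<bullet>p') + (x\<bullet>y')*(y\<bullet>p')*(p\<bullet>x') + (x\<bullet>p')*(y\<bullet>x')*(p\<bullet>y')
    - (x\<bullet>x')*(y\<bullet>p')*(p\<bullet>y') - (x\<bullet>y')*(y\<bullet>x')*(p\<bullet>p') - (x\<bullet>p')*(y\<bullet>y')*(p\<bullet>x')"
  unfolding inner_vec_4 sphere_cross_nth by algebra

lemma sphere_cross_orthogonal:
  "sphere_cross p u v \<bullet> p = 0" "sphere_cross p u v \<bullet> u = 0" "sphere_cross p u v \<bullet> v = 0"
  unfolding inner_vec_4 sphere_cross_nth by algebra+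

lemma sphere_cross_confV: "sphere_cross p (confV a p) v = sphere_cross p a v"
  by (simp add: confV_def vec_eq_iff forall_4 sphere_cross_nth inner_vec_4 algebra_simps)

lemma sphere_cross_base_right: "sphere_cross p u p = 0"
  by (simp add: vec_eq_iff forall_4 sphere_cross_nth algebra_simps)

lemma sphere_cross_scaleR_right: "sphere_cross p u (c *\<^sub>R v) = c *\<^sub>R sphere_cross p u v"
  by (simp add: vec_eq_iff forall_4 sphere_cross_nth algebra_simps)

lemma sphere_cross_diff_right: "sphere_cross p u (v - w) = sphere_cross p u v - sphere_cross p u w"
  by (simp add: vec_eq_iff forall_4 sphere_cross_nth algebra_simps)

lemma bounded_bilinear_sphere_cross: "bounded_bilinear (\<lambda>p v. sphere_cross p u v)"
proof -
  have "bilinear (\<lambda>p v. sphere_cross p u v)"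
    unfolding bilinear_def
    by (auto intro!: linearI simp: vec_eq_iff forall_4 sphere_cross_nth algebra_simps)
  then show ?thesis by (simp add: bilinear_conv_bounded_bilinear)
qed

lemma inner_sphere_cross_orthonormal:
  assumes "p \<bullet> p = 1" "v \<bullet> v = 1" "p \<bullet> v = 0"
  shows "sphere_cross p u v \<bullet> sphere_cross p u v = u \<bullet> u - (u \<bullet> p)\<^sup>2 - (u \<bullet> v)\<^sup>2"
  unfolding inner_sphere_cross_sphere_cross using assms
  by (simp add: inner_commute power2_eq_square algebra_simps)

lemma inner_sphere_cross_common_right:
  assumes "p \<bullet> p = 1" "p \<bullet> v = 0" "w \<bullet> p = 0" "w \<bullet> v = 0"
  shows "sphere_cross p u w \<bullet> sphere_cross p v w = (u \<bullet> v) * (w \<bullet> w)"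
  unfolding inner_sphere_cross_sphere_cross using assms
  by (simp add: inner_commute algebra_simps)

lemma sphere_cross_eq_0_imp_in_plane:
  assumes "p \<bullet> p = 1" "v \<bullet> v = 1" "p \<bullet> v = 0" "sphere_cross p u v = 0"
  shows "u = (u \<bullet> p) *\<^sub>R p + (u \<bullet> v) *\<^sub>R v"
proof -
  define d where "d = u - (u \<bullet> p) *\<^sub>R p - (u \<bullet> v) *\<^sub>R v"
  have "d \<bullet> d = u \<bullet> u - (u \<bullet> p)\<^sup>2 - (u \<bullet> v)\<^sup>2"
    unfolding d_def using assms(1-3)
    by (simp add: inner_commute[of v p] inner_commute[of p u] inner_commute[of v u]
        power2_eq_square algebra_simps)
  also have "\<dots> = 0"
    using inner_sphere_cross_orthonormal[OF assms(1-3), of u] assms(4) by simp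
  finally have "d = 0" by simp
  then show ?thesis unfolding d_def by (simp add: algebra_simps)
qed

lemma rotation_orthonormal:
  fixes x y :: "'a::real_inner" and \<theta> :: real
  assumes "x \<bullet> x = 1" "y \<bullet> y = 1" "x \<bullet> y = 0"
  defines "v \<equiv> cos \<theta> *\<^sub>R x - sin \<theta> *\<^sub>R y" and "w \<equiv> sin \<theta> *\<^sub>R x + cos \<theta> *\<^sub>R y"
  shows "norm v = 1" "norm w = 1" "v \<bullet> w = 0"
proof -
  have c2: "cos \<theta> * cos \<theta> + sin \<theta> * sin \<theta> = 1"
    by (metis sin_cos_squared_add2 power2_eq_square)
  have "v \<bullet> v = cos \<theta> * cos \<theta> + sin \<theta> * sin \<theta>" "w \<bullet> w = sin \<theta> * sin \<theta> + cos \<theta> * cos \<theta>"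
    unfolding v_def w_def using assms(1-3)
    by (simp_all add: inner_commute algebra_simps)
  then show "norm v = 1" "norm w = 1" using c2 by (simp_all add: norm_eq_1 add.commute)
  show "v \<bullet> w = 0"
    unfolding v_def w_def using assms(1-3)
    by (simp add: inner_commute algebra_simps)
qed

lemma rotation_inverse:
  fixes x y :: "'a::real_vector" and \<theta> :: real
  shows "cos \<theta> *\<^sub>R (cos \<theta> *\<^sub>R x - sin \<theta> *\<^sub>R y) + sin \<theta> *\<^sub>R (sin \<theta> *\<^sub>R x + cos \<theta> *\<^sub>R y) = x"
    and "- sin \<theta> *\<^sub>R (cos \<theta> *\<^sub>R x - sin \<theta> *\<^sub>R y) + cos \<theta> *\<^sub>R (sin \<theta> *\<^sub>R x + cos \<theta> *\<^sub>R y) = y"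
proof -
  have "cos \<theta> *\<^sub>R (cos \<theta> *\<^sub>R x - sin \<theta> *\<^sub>R y) + sin \<theta> *\<^sub>R (sin \<theta> *\<^sub>R x + cos \<theta> *\<^sub>R y)
      = (cos \<theta> * cos \<theta>) *\<^sub>R x + (sin \<theta> * sin \<theta>) *\<^sub>R x"
    by (simp add: algebra_simps)
  also have "\<dots> = x" by (simp flip: scaleR_add_left)
  finally show "cos \<theta> *\<^sub>R (cos \<theta> *\<^sub>R x - sin \<theta> *\<^sub>R y) + sin \<theta> *\<^sub>R (sin \<theta> *\<^sub>R x + cos \<theta> *\<^sub>R y) = x" .
  have "- sin \<theta> *\<^sub>R (cos \<theta> *\<^sub>R x - sin \<theta> *\<^sub>R y) + cos \<theta> *\<^sub>R (sin \<theta> *\<^sub>R x + cos \<theta> *\<^sub>R y)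
      = (cos \<theta> * cos \<theta>) *\<^sub>R y + (sin \<theta> * sin \<theta>) *\<^sub>R y"
    by (simp add: algebra_simps)
  also have "\<dots> = y" by (simp flip: scaleR_add_left)
  finally show "- sin \<theta> *\<^sub>R (cos \<theta> *\<^sub>R x - sin \<theta> *\<^sub>R y) + cos \<theta> *\<^sub>R (sin \<theta> *\<^sub>R x + cos \<theta> *\<^sub>R y) = y" .
qed

lemma harmonic_oscillator_solution:
  fixes f f' :: "real \<Rightarrow> 'a::real_inner"
  assumes "is_interval I" "s0 \<in> I" "t \<in> I"
    and f: "\<And>t. t \<in> I \<Longrightarrow> (f has_vector_derivative f' t) (at t)"
    and f': "\<And>t. t \<in> I \<Longrightarrow> (f' has_vector_derivative - f t) (at t)"
  defines "A \<equiv> cos s0 *\<^sub>R f s0 - sin s0 *\<^sub>R f' s0" and "B \<equiv> sin s0 *\<^sub>R f s0 + cos s0 *\<^sub>R f' s0"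
  shows "f t = cos t *\<^sub>R A + sin t *\<^sub>R B" and "f' t = - sin t *\<^sub>R A + cos t *\<^sub>R B"
proof -
  define h where "h t = f t - (cos t *\<^sub>R A + sin t *\<^sub>R B)" for t
  define k where "k t = f' t - (- sin t *\<^sub>R A + cos t *\<^sub>R B)" for t
  have dh: "(h has_vector_derivative k t) (at t)" if "t \<in> I" for t
    unfolding h_def k_def using f[OF that]
    by (auto intro!: derivative_eq_intros simp: algebra_simps)
  have dk: "(k has_vector_derivative - h t) (at t)" if "t \<in> I" for t
    unfolding h_def k_def using f'[OF that]
    by (auto intro!: derivative_eq_intros simp: algebra_simps)
  define E where "E t = h t \<bullet> h t + k t \<bullet> k t" for t
  \<comment> \<open>the energy of the difference to the claimed solution is conserved\<close>
  have dE: "(E has_real_derivative 0) (at t within I)" if "t \<in> I" for t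
  proof -
    have "(E has_vector_derivative
        h t \<bullet> k t + k t \<bullet> h t + (k t \<bullet> - h t + - h t \<bullet> k t)) (at t)"
      unfolding E_def[abs_def]
      using bounded_bilinear.has_vector_derivative[OF bounded_bilinear_inner dh[OF that] dh[OF that]]
        bounded_bilinear.has_vector_derivative[OF bounded_bilinear_inner dk[OF that] dk[OF that]]
      by (rule has_vector_derivative_add)
    then show ?thesis
      by (simp add: inner_commute[of "k t"] has_real_derivative_iff_has_vector_derivative
          has_vector_derivative_at_within)
  qed
  obtain c where c: "\<forall>t\<in>I. E t = c"
    using has_field_derivative_zero_constant[OF is_interval_convex[OF \<open>is_interval I\<close>] dE] by blast
  have "h s0 = 0" "k s0 = 0"
    using rotation_inverse[of s0 "f s0" "f' s0"] unfolding h_def k_def A_def B_def by simp_all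
  then have "E s0 = 0" unfolding E_def by simp
  with c \<open>s0 \<in> I\<close> \<open>t \<in> I\<close> have "E t = 0" by metis
  then have "h t \<bullet> h t + k t \<bullet> k t = 0" unfolding E_def .
  then have "h t = 0" "k t = 0" by (simp_all add: add_nonneg_eq_0_iff)
  then show "f t = cos t *\<^sub>R A + sin t *\<^sub>R B" "f' t = - sin t *\<^sub>R A + cos t *\<^sub>R B"
    unfolding h_def k_def by simp_all
qed

lemma inner_derivative_eq_0_if_constant:
  fixes f h :: "real \<Rightarrow> 'a::real_inner"
  assumes "open I" "t \<in> I" "\<And>x. x \<in> I \<Longrightarrow> f x \<bullet> h x = c"
    and "(f has_vector_derivative f') (at t)" "(h has_vector_derivative h') (at t)"
  shows "f t \<bullet> h' + f' \<bullet> h t = 0"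
proof -
  have "((\<lambda>x. f x \<bullet> h x) has_real_derivative f t \<bullet> h' + f' \<bullet> h t) (at t)"
    using bounded_bilinear.has_vector_derivative[OF bounded_bilinear_inner assms(4,5)]
    by (simp add: has_real_derivative_iff_has_vector_derivative)
  moreover have "((\<lambda>x. f x \<bullet> h x) has_real_derivative 0) (at t)"
    by (rule has_field_derivative_transform_within_open[of "\<lambda>_. c"]) (use assms in auto)
  ultimately show ?thesis using DERIV_unique by blast
qed

definition accel :: "(real \<Rightarrow> real^4) \<Rightarrow> real \<Rightarrow> real^4" where
  "accel g s = vector_derivative (vel g) (at s)"

locale unit_speed_sphere_curve =
  fixes I :: "real set" and g :: "real \<Rightarrow> real^4"
  assumes open_I: "open I" and interval_I: "is_interval I"
    and norm_curve: "\<And>s. s \<in> I \<Longrightarrow> norm (g s) = 1"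
    and differentiable_curve: "\<And>s. s \<in> I \<Longrightarrow> g differentiable (at s)"
    and differentiable_vel: "\<And>s. s \<in> I \<Longrightarrow> vel g differentiable (at s)"
    and norm_vel: "\<And>s. s \<in> I \<Longrightarrow> norm (vel g s) = 1"
begin

lemma has_vector_derivative_curve:
  assumes "s \<in> I" shows "(g has_vector_derivative vel g s) (at s)"
  using differentiable_curve[OF assms] unfolding vel_def vector_derivative_works .

lemma has_vector_derivative_vel:
  assumes "s \<in> I" shows "(vel g has_vector_derivative accel g s) (at s)"
  using differentiable_vel[OF assms] unfolding accel_def vector_derivative_works .

lemma inner_curve_vel:
  assumes "s \<in> I" shows "g s \<bullet> vel g s = 0"
proof -
  have "g s \<bullet> vel g s + vel g s \<bullet> g s = 0"
    by (rule inner_derivative_eq_0_if_constant[where c = 1, OF open_I assms _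
          has_vector_derivative_curve[OF assms] has_vector_derivative_curve[OF assms]])
      (simp add: norm_curve flip: norm_eq_1)
  then show ?thesis by (simp add: inner_commute)
qed

lemma inner_curve_accel:
  assumes "s \<in> I" shows "g s \<bullet> accel g s = -1"
proof -
  have "g s \<bullet> accel g s + vel g s \<bullet> vel g s = 0"
    by (rule inner_derivative_eq_0_if_constant[where c = 0, OF open_I assms _
          has_vector_derivative_curve[OF assms] has_vector_derivative_vel[OF assms]])
      (rule inner_curve_vel)
  then show ?thesis using norm_vel[OF assms] by (simp add: norm_eq_1)
qed

lemma cov_deriv_vel: "s \<in> I \<Longrightarrow> cov_deriv g (vel g) s = accel g s + g s"
  using inner_curve_accel by (simp add: cov_deriv_def accel_def[symmetric] inner_commute)

lemma geodesic_great_circle: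
  assumes geodesic: "\<And>s. s \<in> I \<Longrightarrow> cov_deriv g (vel g) s = 0" and "s0 \<in> I"
  shows "\<exists>v w. norm v = 1 \<and> norm w = 1 \<and> v \<bullet> w = 0 \<and>
    (\<forall>s\<in>I. g s = cos s *\<^sub>R v + sin s *\<^sub>R w \<and> vel g s = - sin s *\<^sub>R v + cos s *\<^sub>R w)"
proof -
  have "(vel g has_vector_derivative - g s) (at s)" if "s \<in> I" for s
  proof -
    have "accel g s = - g s"
      using cov_deriv_vel[OF that] geodesic[OF that] by (simp add: eq_neg_iff_add_eq_0)
    then show ?thesis using has_vector_derivative_vel[OF that] by simp
  qed
  note solution = harmonic_oscillator_solution[OF interval_I \<open>s0 \<in> I\<close> _
      has_vector_derivative_curve this]
  have "g s0 \<bullet> g s0 = 1" "vel g s0 \<bullet> vel g s0 = 1" "g s0 \<bullet> vel g s0 = 0"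
    using \<open>s0 \<in> I\<close> by (simp_all add: norm_curve norm_vel inner_curve_vel flip: norm_eq_1)
  from rotation_orthonormal[OF this, of s0] solution show ?thesis by blast
qed

end

locale conformal_trajectory = unit_speed_sphere_curve +
  fixes a :: "real^4" and q :: real
  assumes conformal:
    "\<And>s. s \<in> I \<Longrightarrow> cov_deriv g (vel g) s = q *\<^sub>R sphere_cross (g s) (confV a (g s)) (vel g s)"
begin

lemma cov_deriv_vel_eq: "s \<in> I \<Longrightarrow> cov_deriv g (vel g) s = q *\<^sub>R sphere_cross (g s) a (vel g s)"
  by (simp add: conformal sphere_cross_confV)

lemma accel_eq: "s \<in> I \<Longrightarrow> accel g s = q *\<^sub>R sphere_cross (g s) a (vel g s) - g s"
  using cov_deriv_vel cov_deriv_vel_eq by (metis add_diff_cancel_right')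

lemma inner_curve_harmonic:
  "\<exists>a1 a2. \<forall>s\<in>I. g s \<bullet> a = a1 * cos s + a2 * sin s \<and> vel g s \<bullet> a = - a1 * sin s + a2 * cos s"
proof (cases "I = {}")
  case False
  then obtain s0 where "s0 \<in> I" by blast
  have d1: "((\<lambda>s. g s \<bullet> a) has_vector_derivative vel g s \<bullet> a) (at s)" if "s \<in> I" for s
    using bounded_linear.has_vector_derivative[OF bounded_linear_inner_left[of a]
        has_vector_derivative_curve[OF that]] .
  have d2: "((\<lambda>s. vel g s \<bullet> a) has_vector_derivative - (g s \<bullet> a)) (at s)" if "s \<in> I" for s
  proof -
    have "accel g s \<bullet> a = - (g s \<bullet> a)"
      using accel_eq[OF that] sphere_cross_orthogonal(2) by (simp add: inner_diff_left)
    then show ?thesis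
      using bounded_linear.has_vector_derivative[OF bounded_linear_inner_left[of a]
          has_vector_derivative_vel[OF that]] by simp
  qed
  define a1 where "a1 = cos s0 * (g s0 \<bullet> a) - sin s0 * (vel g s0 \<bullet> a)"
  define a2 where "a2 = sin s0 * (g s0 \<bullet> a) + cos s0 * (vel g s0 \<bullet> a)"
  have "g s \<bullet> a = a1 * cos s + a2 * sin s \<and> vel g s \<bullet> a = - a1 * sin s + a2 * cos s"
    if "s \<in> I" for s
    using harmonic_oscillator_solution[OF interval_I \<open>s0 \<in> I\<close> that d1 d2]
    unfolding a1_def a2_def by (simp add: algebra_simps)
  then show ?thesis by blast
qed auto

lemma has_vector_derivative_cross_vel:
  assumes "s \<in> I"
  shows "((\<lambda>s. sphere_cross (g s) a (vel g s)) has_vector_derivative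
    q *\<^sub>R sphere_cross (g s) a (sphere_cross (g s) a (vel g s))) (at s)"
proof -
  have "((\<lambda>s. sphere_cross (g s) a (vel g s)) has_vector_derivative
      sphere_cross (g s) a (accel g s) + sphere_cross (vel g s) a (vel g s)) (at s)"
    by (rule bounded_bilinear.has_vector_derivative[OF bounded_bilinear_sphere_cross
          has_vector_derivative_curve[OF assms] has_vector_derivative_vel[OF assms]])
  then show ?thesis
    by (simp add: accel_eq[OF assms] sphere_cross_diff_right sphere_cross_scaleR_right
        sphere_cross_base_right)
qed

lemma geodesic_plane:
  assumes "q \<noteq> 0" "I \<noteq> {}" and geodesic: "\<And>s. s \<in> I \<Longrightarrow> cov_deriv g (vel g) s = 0"
  shows "\<exists>v w. norm v = 1 \<and> norm w = 1 \<and> v \<bullet> w = 0 \<and> a \<in> span {v, w} \<and>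
    (\<forall>s\<in>I. g s = cos s *\<^sub>R v + sin s *\<^sub>R w)"
proof -
  obtain s0 where "s0 \<in> I" using \<open>I \<noteq> {}\<close> by blast
  obtain v w where vw: "norm v = 1" "norm w = 1" "v \<bullet> w = 0"
    and circle: "\<forall>s\<in>I. g s = cos s *\<^sub>R v + sin s *\<^sub>R w \<and> vel g s = - sin s *\<^sub>R v + cos s *\<^sub>R w"
    using geodesic_great_circle[OF geodesic \<open>s0 \<in> I\<close>] by blast
  have "sphere_cross (g s0) a (vel g s0) = 0"
    using cov_deriv_vel_eq[OF \<open>s0 \<in> I\<close>] geodesic[OF \<open>s0 \<in> I\<close>] \<open>q \<noteq> 0\<close> by simp
  then have "a = (a \<bullet> g s0) *\<^sub>R g s0 + (a \<bullet> vel g s0) *\<^sub>R vel g s0"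
    using \<open>s0 \<in> I\<close> by (intro sphere_cross_eq_0_imp_in_plane)
      (simp_all add: norm_curve norm_vel inner_curve_vel flip: norm_eq_1)
  moreover have "x *\<^sub>R v + y *\<^sub>R w \<in> span {v, w}" for x y
    by (intro span_add span_mul) (simp_all add: span_base)
  then have "g s0 \<in> span {v, w}" "vel g s0 \<in> span {v, w}"
    using circle \<open>s0 \<in> I\<close> by (metis, metis)
  ultimately have "a \<in> span {v, w}"
    by (metis span_add span_mul)
  with vw circle show ?thesis by blast
qed

context
  fixes a1 a2 :: real
  assumes inner_curve_a: "\<And>s. s \<in> I \<Longrightarrow> g s \<bullet> a = a1 * cos s + a2 * sin s"
    and inner_vel_a: "\<And>s. s \<in> I \<Longrightarrow> vel g s \<bullet> a = - a1 * sin s + a2 * cos s"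
begin

lemma inner_cross_vel_self:
  assumes "s \<in> I"
  shows "sphere_cross (g s) a (vel g s) \<bullet> sphere_cross (g s) a (vel g s) = (norm a)\<^sup>2 - (a1\<^sup>2 + a2\<^sup>2)"
proof -
  have "(g s \<bullet> a)\<^sup>2 + (vel g s \<bullet> a)\<^sup>2 = (a1\<^sup>2 + a2\<^sup>2) * ((sin s)\<^sup>2 + (cos s)\<^sup>2)"
    unfolding inner_curve_a[OF assms] inner_vel_a[OF assms] by algebra
  moreover have "g s \<bullet> g s = 1" "vel g s \<bullet> vel g s = 1"
    using assms by (simp_all add: norm_curve norm_vel flip: norm_eq_1)
  ultimately show ?thesis
    using inner_sphere_cross_orthonormal inner_curve_vel[OF assms]
    by (simp add: inner_commute power2_norm_eq_inner)
qed

lemma curv_eq: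
  assumes "s \<in> I" shows "curv g s = \<bar>q\<bar> * sqrt ((norm a)\<^sup>2 - (a1\<^sup>2 + a2\<^sup>2))"
proof -
  have "curv g s = \<bar>q\<bar> * norm (sphere_cross (g s) a (vel g s))"
    by (simp add: curv_def cov_deriv_vel_eq[OF assms])
  then show ?thesis by (simp add: norm_eq_sqrt_inner[of "sphere_cross _ _ _"] inner_cross_vel_self[OF assms])
qed

lemma frenetN_eq:
  assumes "s \<in> I"
  shows "frenetN g s = (q / (\<bar>q\<bar> * sqrt ((norm a)\<^sup>2 - (a1\<^sup>2 + a2\<^sup>2)))) *\<^sub>R sphere_cross (g s) a (vel g s)"
  by (simp add: frenetN_def curv_eq[OF assms] cov_deriv_vel_eq[OF assms])

text \<open>The non-geodesic hypothesis makes \<open>q \<noteq> 0\<close> and \<open>|a|\<^sup>2 - (a\<^sub>1\<^sup>2 + a\<^sub>2\<^sup>2) > 0\<close>, so the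
  normal is \<open>N = c (a \<times> T)\<close> with \<open>c\<^sup>2 |a \<times> T|\<^sup>2 = 1\<close>.\<close>
lemma tors_eq:
  assumes "s1 \<in> I" "cov_deriv g (vel g) s1 \<noteq> 0" and "s \<in> I"
  shows "tors g s = - q * (a1 * sin s - a2 * cos s)"
proof -
  define W where "W s = sphere_cross (g s) a (vel g s)" for s
  define K where "K = (norm a)\<^sup>2 - (a1\<^sup>2 + a2\<^sup>2)"
  define c where "c = q / (\<bar>q\<bar> * sqrt K)"
  have "q \<noteq> 0" "W s1 \<noteq> 0"
    using assms(2) cov_deriv_vel_eq[OF assms(1)] by (auto simp: W_def)
  then have "W s1 \<bullet> W s1 > 0" by simp
  then have "K > 0"
    using inner_cross_vel_self[OF assms(1)] by (simp add: W_def K_def)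
  then have c2K: "c * c * K = 1"
    using \<open>q \<noteq> 0\<close> by (simp add: c_def power2_eq_square[symmetric] power_divide power_mult_distrib)
  have "(frenetN g has_vector_derivative (c * q) *\<^sub>R sphere_cross (g s) a (W s)) (at s)"
  proof (rule has_vector_derivative_transform_within_open[OF _ open_I \<open>s \<in> I\<close>])
    show "((\<lambda>s. c *\<^sub>R W s) has_vector_derivative (c * q) *\<^sub>R sphere_cross (g s) a (W s)) (at s)"
      using has_vector_derivative_scaleR[OF DERIV_const
          has_vector_derivative_cross_vel[OF \<open>s \<in> I\<close>], of c]
      by (simp add: W_def[abs_def])
  qed (simp add: frenetN_eq W_def c_def K_def)
  then have dN: "vector_derivative (frenetN g) (at s) = (c * q) *\<^sub>R sphere_cross (g s) a (W s)"
    by (rule vector_derivative_at)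
  have B: "frenetB g s = c *\<^sub>R sphere_cross (g s) (vel g s) (W s)"
    by (simp add: frenetB_def frenetN_eq[OF \<open>s \<in> I\<close>] W_def c_def K_def sphere_cross_scaleR_right)
  have "g s \<bullet> frenetB g s = 0"
    using sphere_cross_orthogonal(1) by (simp add: B inner_commute)
  then have "tors g s = ((c * q) *\<^sub>R sphere_cross (g s) a (W s)) \<bullet> frenetB g s"
    by (simp add: tors_def cov_deriv_def dN inner_diff_left)
  also have "\<dots> = c * c * q * (sphere_cross (g s) a (W s) \<bullet> sphere_cross (g s) (vel g s) (W s))"
    by (simp add: B)
  also have "\<dots> = c * c * q * ((a \<bullet> vel g s) * (W s \<bullet> W s))"
    using \<open>s \<in> I\<close> unfolding W_def
    by (subst inner_sphere_cross_common_right)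
      (simp_all add: norm_curve inner_curve_vel sphere_cross_orthogonal flip: norm_eq_1)
  also have "\<dots> = q * (vel g s \<bullet> a)"
    using c2K inner_cross_vel_self[OF \<open>s \<in> I\<close>] by (simp add: W_def K_def inner_commute)
  finally show ?thesis
    by (simp add: inner_vel_a[OF \<open>s \<in> I\<close>] algebra_simps)
qed


end

end

theorem theorem2:
  fixes a :: "real^4" and q :: real and I :: "real set" and g :: "real \<Rightarrow> real^4"
  assumes a_nz: "a \<noteq> 0"
    and q_nz: "q \<noteq> 0"
    and I_open: "open I" and I_int: "is_interval I" and I_ne: "I \<noteq> {}"
    and on_sphere: "\<forall>s\<in>I. norm (g s) = 1"
    and smooth1: "\<forall>s\<in>I. g differentiable (at s)"
    and smooth2: "\<forall>s\<in>I. vel g differentiable (at s)"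
    and smooth3: "\<forall>s\<in>I. (\<lambda>t. vector_derivative (vel g) (at t)) differentiable (at s)"
    and unit_speed: "\<forall>s\<in>I. norm (vel g s) = 1"
    and conformal: "\<forall>s\<in>I. cov_deriv g (vel g) s = q *\<^sub>R sphere_cross (g s) (confV a (g s)) (vel g s)"
  shows "\<exists>a1 a2 :: real.
     (\<forall>s\<in>I. g s \<bullet> a = a1 * cos s + a2 * sin s) \<and>
     ((\<forall>s\<in>I. cov_deriv g (vel g) s = 0) \<longrightarrow>
        (\<exists>v w :: real^4. norm v = 1 \<and> norm w = 1 \<and> v \<bullet> w = 0 \<and> a \<in> span {v, w} \<and>
           (\<forall>s\<in>I. g s = cos s *\<^sub>R v + sin s *\<^sub>R w))) \<and>
     (\<not> (\<forall>s\<in>I. cov_deriv g (vel g) s = 0) \<longrightarrow>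
        (\<forall>s\<in>I. curv g s = \<bar>q\<bar> * sqrt ((norm a)\<^sup>2 - (a1\<^sup>2 + a2\<^sup>2)) \<and>
                tors g s = - q * (a1 * sin s - a2 * cos s)))"
proof -
  interpret conformal_trajectory I g a q
    using I_open I_int on_sphere smooth1 smooth2 unit_speed conformal by unfold_locales auto
  obtain a1 a2 where harmonic:
    "\<forall>s\<in>I. g s \<bullet> a = a1 * cos s + a2 * sin s \<and> vel g s \<bullet> a = - a1 * sin s + a2 * cos s"
    using inner_curve_harmonic by blast
  then have inner_curve_a: "\<And>s. s \<in> I \<Longrightarrow> g s \<bullet> a = a1 * cos s + a2 * sin s"
    and inner_vel_a: "\<And>s. s \<in> I \<Longrightarrow> vel g s \<bullet> a = - a1 * sin s + a2 * cos s"
    by blast+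
  have geodesic_case: "(\<forall>s\<in>I. cov_deriv g (vel g) s = 0) \<longrightarrow>
      (\<exists>v w. norm v = 1 \<and> norm w = 1 \<and> v \<bullet> w = 0 \<and> a \<in> span {v, w} \<and>
        (\<forall>s\<in>I. g s = cos s *\<^sub>R v + sin s *\<^sub>R w))"
    using geodesic_plane[OF q_nz I_ne] by blast
  have non_geodesic_case: "\<not> (\<forall>s\<in>I. cov_deriv g (vel g) s = 0) \<longrightarrow>
      (\<forall>s\<in>I. curv g s = \<bar>q\<bar> * sqrt ((norm a)\<^sup>2 - (a1\<^sup>2 + a2\<^sup>2)) \<and>
        tors g s = - q * (a1 * sin s - a2 * cos s))"
    using curv_eq[OF inner_curve_a inner_vel_a] tors_eq[OF inner_curve_a inner_vel_a] by blast
  show ?thesis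
    using inner_curve_a geodesic_case non_geodesic_case by blast
qed

end
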